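(* Let $a,b,c\in C(\mathbb{R}^+)$, let $y\not\equiv0$ be a solution of $\dddot y+a(t)\ddot y+b(t)\dot y+c(t)y=0$, and let $\kappa(t)=x(t)/|x(t)|$ where $x(t)=(y(t),\dot y(t),\ddot y(t))$. Let $[t_0,t_1]\subset\mathbb{R}^+$ be such that $\kappa(t)$ is not a pole $(0,0,\pm1)$ for $t\in[t_0,t_1]$, and write $\kappa(t)=P(\varphi(t),\theta(t))$ with continuous $\varphi,\theta$. Suppose $\varphi(t_0)\equiv\varphi(t_1)\equiv\frac{\pi}{2}\pmod{2\pi}$ and $\varphi(t_1)=\varphi(t_0)-2\pi$. Then there is a continuous curve $\tilde\kappa:[0,1]\to S^2\setminus\Omega$ with $\tilde\kappa(0)=\kappa(t_0)$, $\tilde\kappa(1)=\kappa(t_1)$, whose image is contained in $\kappa([t_0,t_1])$ (i.e. it is obtained from $\kappa|_{[t_0,t_1]}$ by deleting some parts).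
   Context: $S^2$ is the unit sphere in $\mathbb{R}^3$ and $P(\varphi,\theta)=(\cos\theta\cos\varphi,\cos\theta\sin\varphi,\sin\theta)\in S^2$ denotes the point with spherical coordinates $\varphi$ (longitude) and $\theta\in[-\pi/2,\pi/2]$ (latitude); thus $y=|x|\cos\theta\cos\varphi$, $\dot y=|x|\cos\theta\sin\varphi$, $\ddot y=|x|\sin\theta$. $\Omega=\{(x_0,x_1,x_2)\in S^2: x_0x_2-x_1^2>0\}$. *)

theory Defs
  imports "HOL-Analysis.Analysis"
begin

definition sph_pt :: "real \<Rightarrow> real \<Rightarrow> real^3" where
  "sph_pt phi theta = vector [cos theta * cos phi, cos theta * sin phi, sin theta]"

definition Omega :: "(real^3) set" where
  "Omega = {x \<in> sphere 0 1. x$1 * x$3 - (x$2)^2 > 0}"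

definition kappa :: "(real \<Rightarrow> real) \<Rightarrow> (real \<Rightarrow> real) \<Rightarrow> (real \<Rightarrow> real) \<Rightarrow> real \<Rightarrow> real^3" where
  "kappa y y1 y2 t = (let x = vector [y t, y1 t, y2 t] :: real^3 in (1 / norm x) *\<^sub>R x)"

end

theory Submission
  imports Defs
begin

text \<open>Since \<open>y' = y1\<close> and \<open>y1' = y2\<close>, the longitude satisfies
  \<open>\<phi>' = tan \<theta> cos \<phi> - sin\<^sup>2 \<phi>\<close>, and \<open>\<kappa>\<^sub>0\<kappa>\<^sub>2 - \<kappa>\<^sub>1\<^sup>2 = cos\<^sup>2 \<theta> \<cdot> \<phi>'\<close>; so \<open>\<kappa>(t) \<notin> \<Omega>\<close> exactly
  when \<open>\<phi>'(t) \<le> 0\<close>. As \<phi> drops by \<open>2\<pi>\<close>, every level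
  \<open>v\<close> in between is crossed with \<open>\<phi>' \<le> 0\<close>, e.g. at its last crossing. On the level set
  \<open>\<phi> = v\<close> the condition \<open>\<phi>' \<le> 0\<close> bounds \<theta> from one side, so the crossing of extremal
  latitude also has \<open>\<phi>' \<le> 0\<close>. Its latitude depends continuously on \<open>v\<close> (where \<open>cos v = 0\<close>
  the crossing is unique, since there \<open>\<phi>' = -1\<close>), and \<open>v \<mapsto> P(v, \<theta>(crossing v))\<close> is
  the required curve.\<close>

section \<open>Spherical coordinates\<close>

lemma sph_pt_nth [simp]:
  "sph_pt \<phi> \<theta> $ 1 = cos \<theta> * cos \<phi>"
  "sph_pt \<phi> \<theta> $ 2 = cos \<theta> * sin \<phi>"
  "sph_pt \<phi> \<theta> $ 3 = sin \<theta>"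
  by (simp_all add: sph_pt_def)

lemma norm_sph_pt [simp]: "norm (sph_pt \<phi> \<theta>) = 1"
proof -
  have "(cos \<theta> * cos \<phi>)\<^sup>2 + (cos \<theta> * sin \<phi>)\<^sup>2 + (sin \<theta>)\<^sup>2
        = (cos \<theta>)\<^sup>2 * ((sin \<phi>)\<^sup>2 + (cos \<phi>)\<^sup>2) + (sin \<theta>)\<^sup>2"
    by algebra
  also have "\<dots> = 1"
    by simp
  finally show ?thesis
    by (simp add: norm_vec_def L2_set_def sum_3)
qed

lemma sph_pt_in_Omega_iff:
  assumes "cos \<theta> > 0"
  shows "sph_pt \<phi> \<theta> \<in> Omega \<longleftrightarrow> 0 < tan \<theta> * cos \<phi> - (sin \<phi>)\<^sup>2"
proof -
  have "sph_pt \<phi> \<theta> \<in> Omega \<longleftrightarrow> 0 < cos \<theta> * cos \<phi> * sin \<theta> - (cos \<theta> * sin \<phi>)\<^sup>2"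
    by (simp add: Omega_def)
  also have "cos \<theta> * cos \<phi> * sin \<theta> - (cos \<theta> * sin \<phi>)\<^sup>2
             = (cos \<theta>)\<^sup>2 * (tan \<theta> * cos \<phi> - (sin \<phi>)\<^sup>2)"
    using assms by (simp add: tan_def power2_eq_square field_simps)
  finally show ?thesis
    using assms by (simp add: zero_less_mult_iff)
qed

lemma cos_pos_if_not_pole:
  assumes "- (pi/2) \<le> \<theta>" "\<theta> \<le> pi/2"
    and "sph_pt \<phi> \<theta> \<noteq> vector [0, 0, 1]" "sph_pt \<phi> \<theta> \<noteq> vector [0, 0, -1]"
  shows "cos \<theta> > 0"
proof -
  have "cos \<theta> \<noteq> 0"
  proof
    assume cos0: "cos \<theta> = 0"
    then have "sin \<theta> = 1 \<or> sin \<theta> = -1"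
      using sin_cos_squared_add[of \<theta>] by (simp add: power2_eq_1_iff)
    then show False
      using assms(3,4) cos0 by (auto simp: sph_pt_def)
  qed
  moreover have "cos \<theta> \<ge> 0"
    using assms(1,2) by (intro cos_ge_zero) auto
  ultimately show ?thesis by simp
qed

lemma abs_less_pi_half_if_cos_pos:
  assumes "- (pi/2) \<le> \<theta>" "\<theta> \<le> pi/2" "cos \<theta> > 0"
  shows "\<bar>\<theta>\<bar> < pi/2"
proof -
  have "\<theta> \<noteq> pi/2" "\<theta> \<noteq> - (pi/2)"
    using assms(3) by (metis cos_pi_half less_irrefl, metis cos_minus cos_pi_half less_irrefl)
  then show ?thesis
    using assms(1,2) by (auto simp: abs_less_iff)
qed

lemma continuous_on_sph_pt:
  fixes f g :: "'a::t2_space \<Rightarrow> real"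
  assumes "continuous_on S f" "continuous_on S g"
  shows "continuous_on S (\<lambda>x. sph_pt (f x) (g x))"
proof -
  have "continuous_on S (\<lambda>x. \<chi> i. sph_pt (f x) (g x) $ i)"
  proof (rule continuous_on_vec_lambda)
    fix i :: 3
    from exhaust_3[of i] show "continuous_on S (\<lambda>x. sph_pt (f x) (g x) $ i)"
      by (elim disjE) (auto intro!: continuous_intros assms)
  qed
  then show ?thesis
    by simp
qed

lemma kappa_eq_sph_ptD:
  fixes y y1 y2 :: "real \<Rightarrow> real" and t :: real
  defines "r \<equiv> norm (vector [y t, y1 t, y2 t] :: real^3)"
  assumes "kappa y y1 y2 t = sph_pt \<phi> \<theta>"
  shows "r > 0" "y t = r * (cos \<theta> * cos \<phi>)" "y1 t = r * (cos \<theta> * sin \<phi>)" "y2 t = r * sin \<theta>"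
proof -
  define x where "x = (vector [y t, y1 t, y2 t] :: real^3)"
  have kx: "sph_pt \<phi> \<theta> = (1 / r) *\<^sub>R x"
    using assms(2) by (simp add: kappa_def Let_def r_def x_def)
  then show "r > 0"
    using norm_sph_pt[of \<phi> \<theta>] by (cases "r = 0") (auto simp: r_def)
  then have "x = r *\<^sub>R sph_pt \<phi> \<theta>"
    by (simp add: kx)
  then show "y t = r * (cos \<theta> * cos \<phi>)" "y1 t = r * (cos \<theta> * sin \<phi>)" "y2 t = r * sin \<theta>"
    by (simp_all add: x_def vec_eq_iff forall_3)
qed

lemma polar_angle_has_real_derivative:
  fixes p q r \<phi> :: "real \<Rightarrow> real"
  assumes p: "(p has_real_derivative p') (at \<tau>)" and q: "(q has_real_derivative q') (at \<tau>)"
    and cont: "continuous_on S \<phi>" and \<tau>: "\<tau> \<in> S"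
    and polar: "\<And>t. t \<in> S \<Longrightarrow> r t > 0 \<and> p t = r t * cos (\<phi> t) \<and> q t = r t * sin (\<phi> t)"
  shows "(\<phi> has_real_derivative (p \<tau> * q' - q \<tau> * p') / ((p \<tau>)\<^sup>2 + (q \<tau>)\<^sup>2)) (at \<tau> within S)"
proof -
  txt \<open>Near \<open>\<tau>\<close>, \<open>\<phi>\<close> stays within \<open>\<pi>/2\<close> of \<open>c = \<phi> \<tau>\<close>; there it is \<open>c\<close> plus the arctangent
    of the slope of \<open>(p, q)\<close> in the frame rotated by \<open>c\<close>.\<close>
  define c where "c = \<phi> \<tau>"
  obtain d where "d > 0" and near: "\<And>t. t \<in> S \<Longrightarrow> dist t \<tau> < d \<Longrightarrow> \<bar>\<phi> t - c\<bar> < pi/2"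
    using cont \<tau> pi_half_gt_zero unfolding continuous_on_iff c_def dist_real_def by blast
  define P where "P t = p t * cos c + q t * sin c" for t
  define Q where "Q t = q t * cos c - p t * sin c" for t
  have PQ: "P t = r t * cos (\<phi> t - c)" "Q t = r t * sin (\<phi> t - c)" if "t \<in> S" for t
    using polar[OF that] by (simp_all add: P_def Q_def cos_diff sin_diff algebra_simps)
  have angle_eq: "c + arctan (Q t / P t) = \<phi> t" if "t \<in> S" "dist t \<tau> < d" for t
  proof -
    have range: "- (pi/2) < \<phi> t - c" "\<phi> t - c < pi/2"
      using near[OF that] by linarith+
    then have "Q t / P t = tan (\<phi> t - c)"
      using PQ[OF that(1)] polar[OF that(1)] cos_gt_zero_pi[OF range] by (simp add: tan_def)
    then show ?thesis
      using arctan_tan[OF range] by simp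
  qed
  have r\<tau>: "r \<tau> > 0" "p \<tau> = r \<tau> * cos c" "q \<tau> = r \<tau> * sin c"
    using polar[OF \<tau>] by (auto simp: c_def)
  have PQ\<tau>: "P \<tau> = r \<tau>" "Q \<tau> = 0"
    using PQ[OF \<tau>] by (simp_all add: c_def)
  have "(P has_real_derivative p' * cos c + q' * sin c) (at \<tau>)"
    "(Q has_real_derivative q' * cos c - p' * sin c) (at \<tau>)"
    unfolding P_def[abs_def] Q_def[abs_def] by (auto intro!: derivative_eq_intros p q)
  then have deriv: "((\<lambda>t. c + arctan (Q t / P t)) has_real_derivative (q' * cos c - p' * sin c) / r \<tau>)
      (at \<tau>)"
    using r\<tau> PQ\<tau> by (auto intro!: derivative_eq_intros simp: field_simps power2_eq_square)
  have "(p \<tau>)\<^sup>2 + (q \<tau>)\<^sup>2 = (r \<tau>)\<^sup>2"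
    unfolding r\<tau>(2,3) power_mult_distrib distrib_left [symmetric] by simp
  then have rate_eq: "(q' * cos c - p' * sin c) / r \<tau> = (p \<tau> * q' - q \<tau> * p') / ((p \<tau>)\<^sup>2 + (q \<tau>)\<^sup>2)"
    using r\<tau> by (simp add: field_simps power2_eq_square)
  show ?thesis
    using has_field_derivative_transform_within[OF _ \<open>d > 0\<close> \<tau> angle_eq] deriv
    by (simp add: rate_eq has_field_derivative_at_within)
qed

lemma longitude_has_real_derivative:
  fixes y y1 y2 \<phi> \<theta> :: "real \<Rightarrow> real"
  assumes y: "(y has_real_derivative y1 t) (at t)" and y1: "(y1 has_real_derivative y2 t) (at t)"
    and cont: "continuous_on S \<phi>" and t: "t \<in> S"
    and repr: "\<And>s. s \<in> S \<Longrightarrow> kappa y y1 y2 s = sph_pt (\<phi> s) (\<theta> s)"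
    and cos_pos: "\<And>s. s \<in> S \<Longrightarrow> cos (\<theta> s) > 0"
  shows "(\<phi> has_real_derivative tan (\<theta> t) * cos (\<phi> t) - (sin (\<phi> t))\<^sup>2) (at t within S)"
proof -
  define N where "N s = norm (vector [y s, y1 s, y2 s] :: real^3)" for s
  have polar: "N s > 0 \<and> y s = N s * (cos (\<theta> s) * cos (\<phi> s))
      \<and> y1 s = N s * (cos (\<theta> s) * sin (\<phi> s)) \<and> y2 s = N s * sin (\<theta> s)"
    if "s \<in> S" for s
    using kappa_eq_sph_ptD[OF repr[OF that]] by (simp add: N_def)
  have deriv: "(\<phi> has_real_derivative (y t * y2 t - y1 t * y1 t) / ((y t)\<^sup>2 + (y1 t)\<^sup>2)) (at t within S)"
    using polar cos_pos
    by (intro polar_angle_has_real_derivative[OF y y1 cont t, where r = "\<lambda>s. N s * cos (\<theta> s)"]) auto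
  have "y t = N t * (cos (\<theta> t) * cos (\<phi> t))" "y1 t = N t * (cos (\<theta> t) * sin (\<phi> t))"
    using polar[OF t] by auto
  then have "(y t)\<^sup>2 + (y1 t)\<^sup>2 = (N t * cos (\<theta> t))\<^sup>2 * ((sin (\<phi> t))\<^sup>2 + (cos (\<phi> t))\<^sup>2)"
    by algebra
  then have "(y t * y2 t - y1 t * y1 t) / ((y t)\<^sup>2 + (y1 t)\<^sup>2) = tan (\<theta> t) * cos (\<phi> t) - (sin (\<phi> t))\<^sup>2"
    using polar[OF t] cos_pos[OF t] by (simp add: tan_def field_simps power2_eq_square)
  then show ?thesis
    using deriv by simp
qed

section \<open>Level sets of real functions\<close>

lemma compact_level_set:
  fixes f :: "'a::t2_space \<Rightarrow> 'b::t1_space"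
  assumes "compact S" "continuous_on S f"
  shows "compact {x \<in> S. f x = v}"
proof -
  have "closed {x \<in> S. f x = v}"
    using assms continuous_closed_preimage_constant compact_imp_closed by blast
  then have "compact (S \<inter> {x \<in> S. f x = v})"
    using assms(1) by blast
  then show ?thesis
    by (simp add: Int_absorb1 subset_iff)
qed

lemma level_crossing_with_nonpos_derivative:
  fixes f f' :: "real \<Rightarrow> real"
  assumes "a \<le> b" and cont: "continuous_on {a..b} f"
    and deriv: "\<And>t. t \<in> {a..b} \<Longrightarrow> (f has_real_derivative f' t) (at t within {a..b})"
    and "f b \<le> v" "v \<le> f a"
  shows "\<exists>t\<in>{a..b}. f t = v \<and> (t = b \<or> f' t \<le> 0)"
proof -
  let ?L = "{t \<in> {a..b}. f t = v}"
  have "?L \<noteq> {}"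
    using IVT2'[of f b v a] assms by auto
  then obtain t where t: "t \<in> ?L" and last: "\<And>s. s \<in> ?L \<Longrightarrow> s \<le> t"
    using compact_attains_sup[OF compact_level_set[OF compact_Icc cont, of v]] by blast
  have "f' t \<le> 0" if "t < b"
  proof (rule ccontr)
    assume "\<not> f' t \<le> 0"
    then obtain d where "d > 0" and up: "\<And>h. h > 0 \<Longrightarrow> t + h \<in> {a..b} \<Longrightarrow> h < d \<Longrightarrow> f t < f (t + h)"
      using has_real_derivative_pos_inc_right[OF deriv[of t]] t by force
    define h where "h = min d (b - t) / 2"
    have h: "0 < h" "h < d" "t + h \<le> b"
      using \<open>d > 0\<close> that by (auto simp: h_def min_def field_simps)
    then have "v < f (t + h)"
      using up t by auto
    moreover have "continuous_on {t + h..b} f"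
      using cont t h by (auto intro: continuous_on_subset)
    ultimately obtain s where "t + h \<le> s" "s \<le> b" "f s = v"
      using IVT2'[of f b v "t + h"] assms(4) h by auto
    then show False
      using last[of s] h t by force
  qed
  then show ?thesis
    using t by (cases "t < b") auto
qed

lemma level_point_unique_if_deriv_neg:
  fixes f f' :: "real \<Rightarrow> real"
  assumes cont: "continuous_on {a..b} f"
    and deriv: "\<And>t. t \<in> {a..b} \<Longrightarrow> (f has_real_derivative f' t) (at t within {a..b})"
    and neg: "\<And>t. t \<in> {a..b} \<Longrightarrow> f t = v \<Longrightarrow> f' t < 0"
    and s: "s \<in> {a..b}" "f s = v" and t: "t \<in> {a..b}" "f t = v"
  shows "s = t"
proof -
  have False if s: "s \<in> {a..b}" "f s = v" and t: "t \<in> {a..b}" "f t = v" and "s < t" for s t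
  proof -
    obtain d where "d > 0" and down: "\<And>h. h > 0 \<Longrightarrow> s + h \<in> {a..b} \<Longrightarrow> h < d \<Longrightarrow> f (s + h) < f s"
      using has_real_derivative_neg_dec_right[OF deriv[OF s(1)] neg[OF s]] by force
    define h where "h = min d (t - s) / 2"
    have h: "0 < h" "h < d" "s + h < t"
      using \<open>d > 0\<close> \<open>s < t\<close> by (auto simp: h_def min_def field_simps)
    define c where "c = s + h"
    have c: "s < c" "c < t" "f c < v"
      using down[of h] h s t by (auto simp: c_def)
    let ?L = "{x \<in> {c..t}. f x = v}"
    have "?L \<noteq> {}"
      using c t by auto
    moreover have "continuous_on {c..t} f"
      using cont s t c by (auto intro: continuous_on_subset)
    ultimately obtain z where z: "z \<in> ?L" and first: "\<And>x. x \<in> ?L \<Longrightarrow> z \<le> x"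
      using compact_attains_inf[OF compact_level_set[OF compact_Icc], of c t f v] by blast
    have "c < z"
      using z c by (cases "z = c") auto
    have below: "f x < v" if x: "c \<le> x" "x < z" for x
    proof (rule ccontr)
      assume "\<not> f x < v"
      moreover have "continuous_on {c..x} f"
        using cont s t x z c by (auto intro: continuous_on_subset)
      ultimately obtain x' where "c \<le> x'" "x' \<le> x" "f x' = v"
        using IVT'[of f c v x] c x by auto
      then show False
        using first[of x'] x z by force
    qed
    have "z \<in> {a..b}"
      using z s t c by auto
    then obtain d' where "d' > 0" and up: "\<And>h. h > 0 \<Longrightarrow> z - h \<in> {a..b} \<Longrightarrow> h < d' \<Longrightarrow> f z < f (z - h)"
      using has_real_derivative_neg_dec_left[OF deriv neg] z by force
    define h' where "h' = min d' (z - c) / 2"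
    have h': "0 < h'" "h' < d'" "c \<le> z - h'" "z - h' < z"
      using \<open>d' > 0\<close> \<open>c < z\<close> by (auto simp: h'_def min_def field_simps)
    then have "v < f (z - h')"
      using up[of h'] z c s t by auto
    then show False
      using below[of "z - h'"] h' by auto
  qed
  then show ?thesis
    using s t by (metis linorder_neqE_linordered_idom)
qed

lemma level_set_attracts:
  fixes f g :: "'a::t2_space \<Rightarrow> real"
  assumes "compact S" and f: "continuous_on S f" and g: "continuous_on S g" and "e > 0"
  shows "\<exists>d>0. \<forall>t\<in>S. \<bar>f t - v\<bar> < d \<longrightarrow> (\<exists>s\<in>S. f s = v \<and> \<bar>g t - g s\<bar> < e)"
proof -
  define A where "A = {t \<in> S. \<forall>s\<in>S. f s = v \<longrightarrow> e \<le> \<bar>g t - g s\<bar>}"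
  have "A = S \<inter> (\<Inter>s\<in>{s \<in> S. f s = v}. {t \<in> S. e \<le> \<bar>g t - g s\<bar>})"
    by (auto simp: A_def)
  moreover have "closed {t \<in> S. e \<le> \<bar>g t - g s\<bar>}" for s
    using assms(1) by (intro continuous_on_closed_Collect_le continuous_intros g compact_imp_closed)
  ultimately have "compact A"
    using compact_Int_closed[OF assms(1)] by (simp add: closed_INT)
  then have "closed (f ` A)"
    using f by (auto intro: compact_imp_closed compact_continuous_image continuous_on_subset simp: A_def)
  moreover have "v \<notin> f ` A"
    using \<open>e > 0\<close> by (auto simp: A_def)
  ultimately obtain d where "d > 0" and d: "ball v d \<subseteq> - f ` A"
    using open_contains_ball[of "- f ` A"] by blast
  show ?thesis
  proof (intro exI[of _ d] conjI ballI impI \<open>d > 0\<close>)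
    fix t assume "t \<in> S" "\<bar>f t - v\<bar> < d"
    then have "f t \<in> ball v d"
      by (simp add: dist_real_def abs_minus_commute)
    then have "t \<notin> A"
      using d by auto
    then show "\<exists>s\<in>S. f s = v \<and> \<bar>g t - g s\<bar> < e"
      using \<open>t \<in> S\<close> by (auto simp: A_def not_le)
  qed
qed

lemma levels_attained_near_deriv_neg:
  fixes f :: "real \<Rightarrow> real"
  assumes cont: "continuous_on {a..b} f"
    and deriv: "(f has_real_derivative D) (at c within {a..b})" "D < 0"
    and "a < c" "c < b" "\<eta> > 0"
  shows "\<exists>d>0. \<forall>w. \<bar>w - f c\<bar> < d \<longrightarrow> (\<exists>t\<in>{a..b}. \<bar>t - c\<bar> < \<eta> \<and> f t = w)"
proof -
  obtain d1 where "d1 > 0" and right: "\<And>h. h > 0 \<Longrightarrow> c + h \<in> {a..b} \<Longrightarrow> h < d1 \<Longrightarrow> f (c + h) < f c"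
    using has_real_derivative_neg_dec_right[OF deriv] by force
  obtain d2 where "d2 > 0" and left: "\<And>h. h > 0 \<Longrightarrow> c - h \<in> {a..b} \<Longrightarrow> h < d2 \<Longrightarrow> f c < f (c - h)"
    using has_real_derivative_neg_dec_left[OF deriv] by force
  define m where "m = min (min d1 d2) (min \<eta> (min (c - a) (b - c)))"
  have "0 < m" "m \<le> d1" "m \<le> d2" "m \<le> \<eta>" "m \<le> c - a" "m \<le> b - c"
    using \<open>d1 > 0\<close> \<open>d2 > 0\<close> assms(4-6) by (auto simp: m_def)
  define h where "h = m / 2"
  have h: "0 < h" "h < d1" "h < d2" "h < \<eta>" "a < c - h" "c + h < b"
    using \<open>0 < m\<close> \<open>m \<le> d1\<close> \<open>m \<le> d2\<close> \<open>m \<le> \<eta>\<close> \<open>m \<le> c - a\<close> \<open>m \<le> b - c\<close>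
    unfolding h_def by linarith+
  have lo: "f (c + h) < f c" and hi: "f c < f (c - h)"
    using right[of h] left[of h] h by auto
  show ?thesis
  proof (intro exI[of _ "min (f c - f (c + h)) (f (c - h) - f c)"] conjI allI impI)
    show "0 < min (f c - f (c + h)) (f (c - h) - f c)"
      using lo hi by auto
    fix w assume "\<bar>w - f c\<bar> < min (f c - f (c + h)) (f (c - h) - f c)"
    then have "f (c + h) \<le> w" "w \<le> f (c - h)"
      by auto
    moreover have "continuous_on {c - h..c + h} f"
      using cont h by (auto intro: continuous_on_subset)
    ultimately obtain t where "c - h \<le> t" "t \<le> c + h" "f t = w"
      using IVT2'[of f "c + h" w "c - h"] h by auto
    then show "\<exists>t\<in>{a..b}. \<bar>t - c\<bar> < \<eta> \<and> f t = w"
      using h by (intro bexI[of _ t]) auto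
  qed
qed

section \<open>The longitude equation\<close>

text \<open>For \<open>cos v \<noteq> 0\<close>, the point \<open>P(v, \<theta>)\<close> lies on the boundary of \<Omega> exactly at this latitude.\<close>
definition stationary_latitude :: "real \<Rightarrow> real" where
  "stationary_latitude v = arctan ((sin v)\<^sup>2 / cos v)"

lemma stationary_latitude_eq_iff:
  assumes "\<bar>\<theta>\<bar> < pi/2" "cos v \<noteq> 0"
  shows "tan \<theta> * cos v - (sin v)\<^sup>2 = 0 \<longleftrightarrow> \<theta> = stationary_latitude v"
proof -
  have \<theta>: "\<theta> = arctan (tan \<theta>)"
    using assms(1) by (simp add: arctan_tan abs_less_iff)
  have "tan \<theta> * cos v - (sin v)\<^sup>2 = 0 \<longleftrightarrow> tan \<theta> = (sin v)\<^sup>2 / cos v"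
    using assms(2) by (auto simp: field_simps)
  also have "\<dots> \<longleftrightarrow> arctan (tan \<theta>) = stationary_latitude v"
    by (metis stationary_latitude_def arctan_eq_iff)
  finally show ?thesis
    using \<theta> by simp
qed

lemma stationary_latitude_le_iff:
  assumes "\<bar>\<theta>\<bar> < pi/2" "cos v \<noteq> 0"
  shows "tan \<theta> * cos v - (sin v)\<^sup>2 \<le> 0 \<longleftrightarrow> sgn (cos v) * \<theta> \<le> sgn (cos v) * stationary_latitude v"
proof -
  have \<theta>: "\<theta> = arctan (tan \<theta>)"
    using assms(1) by (simp add: arctan_tan abs_less_iff)
  consider "cos v > 0" | "cos v < 0"
    using assms(2) by linarith
  then show ?thesis
  proof cases
    case 1
    then have "tan \<theta> * cos v - (sin v)\<^sup>2 \<le> 0 \<longleftrightarrow> tan \<theta> \<le> (sin v)\<^sup>2 / cos v"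
      by (simp add: pos_le_divide_eq)
    then show ?thesis
      using 1 \<theta> by (metis arctan_le_iff mult_1 sgn_pos stationary_latitude_def)
  next
    case 2
    then have "tan \<theta> * cos v - (sin v)\<^sup>2 \<le> 0 \<longleftrightarrow> (sin v)\<^sup>2 / cos v \<le> tan \<theta>"
      by (simp add: neg_divide_le_eq)
    then show ?thesis
      using 2 \<theta> by (metis arctan_le_iff mult_minus1 neg_le_iff_le sgn_neg stationary_latitude_def)
  qed
qed

lemma sgn_cos_locally_constant:
  fixes v :: real
  assumes "cos v \<noteq> 0"
  shows "\<exists>d>0. \<forall>w. \<bar>w - v\<bar> < d \<longrightarrow> sgn (cos w) = sgn (cos v)"
proof -
  obtain d where "d > 0" and d: "\<forall>w. dist w v < d \<longrightarrow> dist (cos w) (cos v) < \<bar>cos v\<bar>"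
    using isCont_cos[of v, unfolded continuous_at_eps_delta, rule_format, of "\<bar>cos v\<bar>"] assms
    by auto
  have "sgn (cos w) = sgn (cos v)" if "\<bar>w - v\<bar> < d" for w
    using d that by (auto simp: dist_real_def sgn_if abs_if split: if_splits)
  then show ?thesis
    using \<open>d > 0\<close> by blast
qed

locale longitude_equation =
  fixes \<phi> \<theta> :: "real \<Rightarrow> real" and t0 t1 :: real
  assumes t0_le_t1: "t0 \<le> t1"
    and continuous_phi: "continuous_on {t0..t1} \<phi>"
    and continuous_theta: "continuous_on {t0..t1} \<theta>"
    and theta_bounds: "\<And>t. t \<in> {t0..t1} \<Longrightarrow> \<bar>\<theta> t\<bar> < pi/2"
    and phi_deriv: "\<And>t. t \<in> {t0..t1} \<Longrightarrow>
      (\<phi> has_real_derivative tan (\<theta> t) * cos (\<phi> t) - (sin (\<phi> t))\<^sup>2) (at t within {t0..t1})"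
    and cos_phi_t0: "cos (\<phi> t0) = 0" and cos_phi_t1: "cos (\<phi> t1) = 0"
    and phi_t1_less: "\<phi> t1 < \<phi> t0"
begin

definition rate :: "real \<Rightarrow> real" where
  "rate t = tan (\<theta> t) * cos (\<phi> t) - (sin (\<phi> t))\<^sup>2"

lemma rate_at_vertical: "cos (\<phi> t) = 0 \<Longrightarrow> rate t = -1"
  using sin_cos_squared_add[of "\<phi> t"] by (simp add: rate_def)

lemma crossing_with_rate_nonpos:
  assumes "v \<in> {\<phi> t1..\<phi> t0}"
  shows "\<exists>t\<in>{t0..t1}. \<phi> t = v \<and> rate t \<le> 0"
  using level_crossing_with_nonpos_derivative[OF t0_le_t1 continuous_phi phi_deriv, of v] assms
    rate_at_vertical[OF cos_phi_t1]
  by (fastforce simp: rate_def)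

lemma level_point_unique_at_vertical:
  assumes "cos v = 0" "s \<in> {t0..t1}" "\<phi> s = v" "t \<in> {t0..t1}" "\<phi> t = v"
  shows "s = t"
  using level_point_unique_if_deriv_neg[OF continuous_phi phi_deriv] rate_at_vertical assms
  by (force simp: rate_def)

text \<open>The factor \<open>sgn (cos v)\<close> selects the crossing of least latitude if \<open>cos v > 0\<close> and of
  greatest latitude if \<open>cos v < 0\<close>; when \<open>cos v = 0\<close> any crossing qualifies, but there is
  only one.\<close>
definition crossing :: "real \<Rightarrow> real" where
  "crossing v = (SOME t. t \<in> {t0..t1} \<and> \<phi> t = v \<and>
     (\<forall>s\<in>{t0..t1}. \<phi> s = v \<longrightarrow> sgn (cos v) * \<theta> t \<le> sgn (cos v) * \<theta> s))"

lemma crossing: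
  assumes "v \<in> {\<phi> t1..\<phi> t0}"
  shows "crossing v \<in> {t0..t1}" "\<phi> (crossing v) = v"
    and "\<And>s. s \<in> {t0..t1} \<Longrightarrow> \<phi> s = v \<Longrightarrow> sgn (cos v) * \<theta> (crossing v) \<le> sgn (cos v) * \<theta> s"
proof -
  let ?L = "{t \<in> {t0..t1}. \<phi> t = v}"
  have "?L \<noteq> {}"
    using IVT2'[OF _ _ t0_le_t1 continuous_phi, of v] assms by auto
  moreover have "continuous_on ?L (\<lambda>t. sgn (cos v) * \<theta> t)"
    by (intro continuous_intros continuous_on_subset[OF continuous_theta]) auto
  ultimately obtain t where "t \<in> ?L" "\<forall>s\<in>?L. sgn (cos v) * \<theta> t \<le> sgn (cos v) * \<theta> s"
    using continuous_attains_inf[OF compact_level_set[OF compact_Icc continuous_phi]] by blast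
  then have "\<exists>t. t \<in> {t0..t1} \<and> \<phi> t = v \<and>
      (\<forall>s\<in>{t0..t1}. \<phi> s = v \<longrightarrow> sgn (cos v) * \<theta> t \<le> sgn (cos v) * \<theta> s)"
    by auto
  from someI_ex[OF this] show "crossing v \<in> {t0..t1}" "\<phi> (crossing v) = v"
    and "\<And>s. s \<in> {t0..t1} \<Longrightarrow> \<phi> s = v \<Longrightarrow> sgn (cos v) * \<theta> (crossing v) \<le> sgn (cos v) * \<theta> s"
    unfolding crossing_def by blast+
qed

lemma rate_crossing_nonpos:
  assumes v: "v \<in> {\<phi> t1..\<phi> t0}"
  shows "rate (crossing v) \<le> 0"
proof (cases "cos v = 0")
  case True
  then show ?thesis
    using rate_at_vertical crossing(2)[OF v] by simp
next
  case False
  obtain t where t: "t \<in> {t0..t1}" "\<phi> t = v" "rate t \<le> 0"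
    using crossing_with_rate_nonpos[OF v] by blast
  have "sgn (cos v) * \<theta> (crossing v) \<le> sgn (cos v) * \<theta> t"
    using crossing(3)[OF v t(1,2)] .
  also have "\<dots> \<le> sgn (cos v) * stationary_latitude v"
    using t False theta_bounds stationary_latitude_le_iff by (simp add: rate_def)
  finally show ?thesis
    using False theta_bounds crossing(1,2)[OF v] stationary_latitude_le_iff by (simp add: rate_def)
qed

lemma crossing_at_vertical:
  assumes "v \<in> {\<phi> t1..\<phi> t0}" "cos v = 0" "s \<in> {t0..t1}" "\<phi> s = v"
  shows "crossing v = s"
  using level_point_unique_at_vertical crossing(1,2) assms by blast

lemma crossing_t0: "crossing (\<phi> t0) = t0"
  using crossing_at_vertical cos_phi_t0 t0_le_t1 phi_t1_less by simp

lemma crossing_t1: "crossing (\<phi> t1) = t1"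
  using crossing_at_vertical cos_phi_t1 t0_le_t1 phi_t1_less by simp

lemma crossing_interior:
  assumes "v \<in> {\<phi> t1..\<phi> t0}" "cos v \<noteq> 0"
  shows "t0 < crossing v" "crossing v < t1"
proof -
  have "crossing v \<noteq> t0" "crossing v \<noteq> t1"
    using crossing(2)[OF assms(1)] assms(2) cos_phi_t0 cos_phi_t1 by auto
  then show "t0 < crossing v" "crossing v < t1"
    using crossing(1)[OF assms(1)] by auto
qed

lemma crossing_latitude_upper_transversal:
  assumes v: "v \<in> {\<phi> t1..\<phi> t0}" and "cos v \<noteq> 0" "rate (crossing v) < 0" "e > 0"
  shows "\<exists>d>0. \<forall>w. \<bar>w - v\<bar> < d \<longrightarrow>
           (\<exists>t\<in>{t0..t1}. \<phi> t = w \<and> sgn (cos v) * \<theta> t < sgn (cos v) * \<theta> (crossing v) + e)"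
proof -
  let ?c = "crossing v"
  obtain \<eta> where "\<eta> > 0" and \<eta>: "\<And>t. t \<in> {t0..t1} \<Longrightarrow> \<bar>t - ?c\<bar> < \<eta> \<Longrightarrow> \<bar>\<theta> t - \<theta> ?c\<bar> < e"
    using continuous_theta crossing(1)[OF v] \<open>e > 0\<close> unfolding continuous_on_iff dist_real_def by blast
  obtain d where "d > 0" and d: "\<forall>w. \<bar>w - v\<bar> < d \<longrightarrow> (\<exists>t\<in>{t0..t1}. \<bar>t - ?c\<bar> < \<eta> \<and> \<phi> t = w)"
    using levels_attained_near_deriv_neg[OF continuous_phi phi_deriv[OF crossing(1)[OF v]]
        assms(3)[unfolded rate_def] crossing_interior[OF v assms(2)] \<open>\<eta> > 0\<close>]
    by (auto simp: crossing(2)[OF v])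
  have "sgn (cos v) * \<theta> t < sgn (cos v) * \<theta> ?c + e" if "t \<in> {t0..t1}" "\<bar>t - ?c\<bar> < \<eta>" for t
    using \<eta>[OF that] assms(2) by (cases "cos v > 0") (auto simp: abs_less_iff)
  then show ?thesis
    using \<open>d > 0\<close> d by blast
qed

lemma crossing_latitude_upper_tangent:
  assumes v: "v \<in> {\<phi> t1..\<phi> t0}" and "cos v \<noteq> 0" "rate (crossing v) = 0" "e > 0"
  shows "\<exists>d>0. \<forall>w\<in>{\<phi> t1..\<phi> t0}. \<bar>w - v\<bar> < d \<longrightarrow>
           (\<exists>t\<in>{t0..t1}. \<phi> t = w \<and> sgn (cos v) * \<theta> t < sgn (cos v) * \<theta> (crossing v) + e)"
proof -
  have c: "\<theta> (crossing v) = stationary_latitude v"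
    using stationary_latitude_eq_iff theta_bounds crossing(1,2)[OF v] assms(2,3) by (simp add: rate_def)
  have "isCont stationary_latitude v"
    unfolding stationary_latitude_def [abs_def] using assms(2) by (intro continuous_intros) auto
  then obtain d1 where "d1 > 0"
    and d1: "\<forall>w. dist w v < d1 \<longrightarrow> dist (stationary_latitude w) (stationary_latitude v) < e"
    using \<open>e > 0\<close> unfolding continuous_at_eps_delta by blast
  obtain d2 where "d2 > 0" and d2: "\<forall>w. \<bar>w - v\<bar> < d2 \<longrightarrow> sgn (cos w) = sgn (cos v)"
    using sgn_cos_locally_constant[OF assms(2)] by blast
  have "\<exists>t\<in>{t0..t1}. \<phi> t = w \<and> sgn (cos v) * \<theta> t < sgn (cos v) * \<theta> (crossing v) + e"
    if w: "w \<in> {\<phi> t1..\<phi> t0}" "\<bar>w - v\<bar> < min d1 d2" for w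
  proof -
    obtain t where t: "t \<in> {t0..t1}" "\<phi> t = w" "rate t \<le> 0"
      using crossing_with_rate_nonpos[OF w(1)] by blast
    have sgn_w: "sgn (cos w) = sgn (cos v)" and "cos w \<noteq> 0"
      using d2 w assms(2) by (auto simp: sgn_0_0)
    then have "sgn (cos v) * \<theta> t \<le> sgn (cos v) * stationary_latitude w"
      using stationary_latitude_le_iff theta_bounds t by (simp add: rate_def)
    moreover have "\<bar>stationary_latitude w - stationary_latitude v\<bar> < e"
      using d1 w by (simp add: dist_real_def)
    ultimately show ?thesis
      using t c assms(2) by (cases "cos v > 0") (auto simp: abs_less_iff)
  qed
  then show ?thesis
    using \<open>d1 > 0\<close> \<open>d2 > 0\<close> by (intro exI[of _ "min d1 d2"]) auto
qed

lemma crossing_latitude_upper: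
  assumes v: "v \<in> {\<phi> t1..\<phi> t0}" and "cos v \<noteq> 0" "e > 0"
  shows "\<exists>d>0. \<forall>w\<in>{\<phi> t1..\<phi> t0}. \<bar>w - v\<bar> < d \<longrightarrow>
           (\<exists>t\<in>{t0..t1}. \<phi> t = w \<and> sgn (cos v) * \<theta> t < sgn (cos v) * \<theta> (crossing v) + e)"
proof (cases "rate (crossing v) = 0")
  case True
  then show ?thesis
    using crossing_latitude_upper_tangent assms by blast
next
  case False
  then have "rate (crossing v) < 0"
    using rate_crossing_nonpos[OF v] by linarith
  then show ?thesis
    using crossing_latitude_upper_transversal[OF v assms(2) _ assms(3)] by blast
qed

lemma continuous_on_crossing_latitude: "continuous_on {\<phi> t1..\<phi> t0} (\<lambda>v. \<theta> (crossing v))"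
  unfolding continuous_on_iff dist_real_def
proof (intro ballI allI impI)
  fix v e :: real
  assume v: "v \<in> {\<phi> t1..\<phi> t0}" and "e > 0"
  obtain d1 where "d1 > 0"
    and d1: "\<forall>t\<in>{t0..t1}. \<bar>\<phi> t - v\<bar> < d1 \<longrightarrow> (\<exists>s\<in>{t0..t1}. \<phi> s = v \<and> \<bar>\<theta> t - \<theta> s\<bar> < e)"
    using level_set_attracts[OF compact_Icc continuous_phi continuous_theta \<open>e > 0\<close>] by blast
  have near_level: "\<exists>s\<in>{t0..t1}. \<phi> s = v \<and> \<bar>\<theta> (crossing w) - \<theta> s\<bar> < e"
    if "w \<in> {\<phi> t1..\<phi> t0}" "\<bar>w - v\<bar> < d1" for w
    using d1 crossing(1,2)[OF that(1)] that(2) by auto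
  show "\<exists>d>0. \<forall>w\<in>{\<phi> t1..\<phi> t0}. \<bar>w - v\<bar> < d \<longrightarrow> \<bar>\<theta> (crossing w) - \<theta> (crossing v)\<bar> < e"
  proof (cases "cos v = 0")
    case True
    then show ?thesis
      using near_level crossing_at_vertical[OF v True] \<open>d1 > 0\<close> by metis
  next
    case False
    obtain d2 where "d2 > 0" and d2: "\<forall>w\<in>{\<phi> t1..\<phi> t0}. \<bar>w - v\<bar> < d2 \<longrightarrow>
        (\<exists>t\<in>{t0..t1}. \<phi> t = w \<and> sgn (cos v) * \<theta> t < sgn (cos v) * \<theta> (crossing v) + e)"
      using crossing_latitude_upper[OF v False \<open>e > 0\<close>] by blast
    obtain d3 where "d3 > 0" and d3: "\<forall>w. \<bar>w - v\<bar> < d3 \<longrightarrow> sgn (cos w) = sgn (cos v)"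
      using sgn_cos_locally_constant[OF False] by blast
    have "\<bar>\<theta> (crossing w) - \<theta> (crossing v)\<bar> < e"
      if w: "w \<in> {\<phi> t1..\<phi> t0}" "\<bar>w - v\<bar> < min d1 (min d2 d3)" for w
    proof -
      obtain s where s: "s \<in> {t0..t1}" "\<phi> s = v" "\<bar>\<theta> (crossing w) - \<theta> s\<bar> < e"
        using near_level[OF w(1)] w(2) by auto
      obtain t where t: "t \<in> {t0..t1}" "\<phi> t = w"
        "sgn (cos v) * \<theta> t < sgn (cos v) * \<theta> (crossing v) + e"
        using d2 w by auto
      have "sgn (cos v) * \<theta> (crossing v) \<le> sgn (cos v) * \<theta> s"
        using crossing(3)[OF v s(1,2)] .
      moreover have "sgn (cos w) = sgn (cos v)"
        using d3 w(2) by simp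
      then have "sgn (cos v) * \<theta> (crossing w) \<le> sgn (cos v) * \<theta> t"
        using crossing(3)[OF w(1) t(1,2)] by simp
      ultimately show ?thesis
        using s(3) t(3) False by (cases "cos v > 0") (auto simp: abs_less_iff)
    qed
    then show ?thesis
      using \<open>d1 > 0\<close> \<open>d2 > 0\<close> \<open>d3 > 0\<close> by (intro exI[of _ "min d1 (min d2 d3)"]) auto
  qed
qed

lemma descending_path:
  obtains \<tau> :: "real \<Rightarrow> real" where "\<And>l. l \<in> {0..1} \<Longrightarrow> \<tau> l \<in> {t0..t1}" "\<And>l. l \<in> {0..1} \<Longrightarrow> rate (\<tau> l) \<le> 0"
    and "\<tau> 0 = t0" "\<tau> 1 = t1" and "continuous_on {0..1} (\<lambda>l. sph_pt (\<phi> (\<tau> l)) (\<theta> (\<tau> l)))"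
proof -
  define V where "V l = \<phi> t0 - l * (\<phi> t0 - \<phi> t1)" for l
  have V: "V l \<in> {\<phi> t1..\<phi> t0}" if "l \<in> {0..1}" for l
  proof -
    have "0 \<le> l * (\<phi> t0 - \<phi> t1)" "l * (\<phi> t0 - \<phi> t1) \<le> \<phi> t0 - \<phi> t1"
      using that phi_t1_less by (auto intro: mult_left_le_one_le)
    then show ?thesis
      by (simp add: V_def)
  qed
  have "continuous_on {0..1} V"
    unfolding V_def by (intro continuous_intros)
  then have "continuous_on {0..1} (\<lambda>l. sph_pt (V l) (\<theta> (crossing (V l))))"
    using V by (intro continuous_on_sph_pt continuous_on_compose2[OF continuous_on_crossing_latitude]) auto
  then have "continuous_on {0..1} (\<lambda>l. sph_pt (\<phi> (crossing (V l))) (\<theta> (crossing (V l))))"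
    by (rule continuous_on_eq) (simp add: crossing(2)[OF V])
  moreover have "crossing (V 0) = t0" "crossing (V 1) = t1"
    using crossing_t0 crossing_t1 by (simp_all add: V_def)
  ultimately show ?thesis
    using that[of "\<lambda>l. crossing (V l)"] crossing(1)[OF V] rate_crossing_nonpos[OF V] by blast
qed

end

theorem lemma3:
  fixes a b c y y1 y2 phi theta :: "real \<Rightarrow> real" and t0 t1 :: real
  assumes cont: "continuous_on {0<..} a" "continuous_on {0<..} b" "continuous_on {0<..} c"
    and d0: "\<And>t. t > 0 \<Longrightarrow> (y has_real_derivative y1 t) (at t)"
    and d1: "\<And>t. t > 0 \<Longrightarrow> (y1 has_real_derivative y2 t) (at t)"
    and d2: "\<And>t. t > 0 \<Longrightarrow>
               (y2 has_real_derivative (- (a t * y2 t + b t * y1 t + c t * y t))) (at t)"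
    and nontriv: "\<exists>t>0. y t \<noteq> 0"
    and t0: "0 < t0" and t01: "t0 \<le> t1"
    and nopole: "\<And>t. t \<in> {t0..t1} \<Longrightarrow>
                   kappa y y1 y2 t \<noteq> vector [0, 0, 1] \<and> kappa y y1 y2 t \<noteq> vector [0, 0, -1]"
    and cphi: "continuous_on {t0..t1} phi" and ctheta: "continuous_on {t0..t1} theta"
    and trange: "\<And>t. t \<in> {t0..t1} \<Longrightarrow> - (pi/2) \<le> theta t \<and> theta t \<le> pi/2"
    and repr: "\<And>t. t \<in> {t0..t1} \<Longrightarrow> kappa y y1 y2 t = sph_pt (phi t) (theta t)"
    and phi0: "\<exists>k::int. phi t0 = pi/2 + 2 * pi * of_int k"
    and phi1: "\<exists>k::int. phi t1 = pi/2 + 2 * pi * of_int k"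
    and phi_diff: "phi t1 = phi t0 - 2 * pi"
  shows "\<exists>g :: real \<Rightarrow> real^3. continuous_on {0..1} g
           \<and> g ` {0..1} \<subseteq> sphere 0 1 - Omega
           \<and> g 0 = kappa y y1 y2 t0 \<and> g 1 = kappa y y1 y2 t1
           \<and> g ` {0..1} \<subseteq> kappa y y1 y2 ` {t0..t1}"
proof -
  have cos_theta: "cos (theta t) > 0" if "t \<in> {t0..t1}" for t
    using cos_pos_if_not_pole[of "theta t" "phi t"] trange[OF that] nopole[OF that]
    unfolding repr[OF that] by blast
  have phi_deriv: "(phi has_real_derivative tan (theta t) * cos (phi t) - (sin (phi t))\<^sup>2)
      (at t within {t0..t1})" if "t \<in> {t0..t1}" for t
    using that t0 by (intro longitude_has_real_derivative[OF d0 d1 cphi that repr cos_theta]) auto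
  have cos_phi: "cos (phi t) = 0" if "\<exists>k::int. phi t = pi/2 + 2 * pi * of_int k" for t
    using that by (auto simp: cos_add)
  interpret longitude_equation phi theta t0 t1
    using t01 cphi ctheta abs_less_pi_half_if_cos_pos trange cos_theta phi_deriv
      cos_phi[OF phi0] cos_phi[OF phi1] phi_diff
    by unfold_locales auto
  obtain \<tau> :: "real \<Rightarrow> real"
    where \<tau>: "\<And>l. l \<in> {0..1} \<Longrightarrow> \<tau> l \<in> {t0..t1}" "\<And>l. l \<in> {0..1} \<Longrightarrow> rate (\<tau> l) \<le> 0"
      and "\<tau> 0 = t0" "\<tau> 1 = t1"
      and cont: "continuous_on {0..1} (\<lambda>l. sph_pt (phi (\<tau> l)) (theta (\<tau> l)))"
    using descending_path by blast
  define g where "g l = kappa y y1 y2 (\<tau> l)" for l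
  have g: "g l = sph_pt (phi (\<tau> l)) (theta (\<tau> l))" if "l \<in> {0..1}" for l
    using repr \<tau>(1)[OF that] by (simp add: g_def)
  have "continuous_on {0..1} g"
    using cont by (rule continuous_on_eq) (simp add: g)
  moreover have "g l \<in> sphere 0 1 - Omega" if "l \<in> {0..1}" for l
    using \<tau>[OF that] cos_theta sph_pt_in_Omega_iff by (auto simp: g[OF that] rate_def)
  ultimately show ?thesis
    using \<tau>(1) \<open>\<tau> 0 = t0\<close> \<open>\<tau> 1 = t1\<close> by (intro exI[of _ g]) (auto simp: g_def)
qed

end
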